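(* If $G$ is a graph with minimum degree $\delta=\delta(G)\ge 1$ and maximum degree $\Delta=\Delta(G)\ge 4\lceil\delta/2\rceil-3$, then $$\mathrm{DC}(G)\le \Big\lceil\tfrac{\delta}{2}\Big\rceil\Big(\Delta-2\Big\lceil\tfrac{\delta}{2}\Big\rceil+2\Big)+1+\Big\lfloor\tfrac{\delta}{2}\Big\rfloor.$$ Moreover, the bound is sharp: for every odd $\delta\ge 3$ there exist graphs with minimum degree $\delta$ satisfying the hypothesis and attaining equality.
   Context: All graphs are finite, simple and connected. $N[v]=N(v)\cup\{v\}$ denotes the closed neighborhood of $v$. For a graph $G$ with $\delta(G)\ge 1$, a set $S\subseteq V(G)$ is a double dominating set if $|N[v]\cap S|\ge 2$ for every $v\in V(G)$. Two disjoint sets $U,W\subseteq V(G)$ form a double coalition if neither is a double dominating set but $U\cup W$ is. A double coalition partition of $G$ is a partition $\Omega$ of $V(G)$ in which every set forms a double coalition with some other set of $\Omega$. The double coalition number $\mathrm{DC}(G)$ is the maximum cardinality of a double coalition partition of $G$. *)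

theory Defs
  imports Main
begin

definition graph :: "'a set \<Rightarrow> ('a \<Rightarrow> 'a \<Rightarrow> bool) \<Rightarrow> bool" where
  "graph V E \<longleftrightarrow> finite V \<and> V \<noteq> {} \<and>
     (\<forall>x y. E x y \<longrightarrow> x \<in> V \<and> y \<in> V) \<and>
     (\<forall>x y. E x y \<longrightarrow> E y x) \<and> (\<forall>x. \<not> E x x) \<and>
     (\<forall>x\<in>V. \<forall>y\<in>V. E\<^sup>*\<^sup>* x y)"

definition nbhd :: "'a set \<Rightarrow> ('a \<Rightarrow> 'a \<Rightarrow> bool) \<Rightarrow> 'a \<Rightarrow> 'a set" where
  "nbhd V E v = {u \<in> V. E v u}"

definition cnbhd :: "'a set \<Rightarrow> ('a \<Rightarrow> 'a \<Rightarrow> bool) \<Rightarrow> 'a \<Rightarrow> 'a set" where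
  "cnbhd V E v = insert v (nbhd V E v)"

definition degree :: "'a set \<Rightarrow> ('a \<Rightarrow> 'a \<Rightarrow> bool) \<Rightarrow> 'a \<Rightarrow> nat" where
  "degree V E v = card (nbhd V E v)"

definition min_deg :: "'a set \<Rightarrow> ('a \<Rightarrow> 'a \<Rightarrow> bool) \<Rightarrow> nat" where
  "min_deg V E = Min (degree V E ` V)"

definition max_deg :: "'a set \<Rightarrow> ('a \<Rightarrow> 'a \<Rightarrow> bool) \<Rightarrow> nat" where
  "max_deg V E = Max (degree V E ` V)"

definition double_dominating :: "'a set \<Rightarrow> ('a \<Rightarrow> 'a \<Rightarrow> bool) \<Rightarrow> 'a set \<Rightarrow> bool" where
  "double_dominating V E S \<longleftrightarrow> S \<subseteq> V \<and> (\<forall>v\<in>V. card (cnbhd V E v \<inter> S) \<ge> 2)"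

definition double_coalition :: "'a set \<Rightarrow> ('a \<Rightarrow> 'a \<Rightarrow> bool) \<Rightarrow> 'a set \<Rightarrow> 'a set \<Rightarrow> bool" where
  "double_coalition V E U W \<longleftrightarrow> U \<inter> W = {} \<and>
     \<not> double_dominating V E U \<and> \<not> double_dominating V E W \<and>
     double_dominating V E (U \<union> W)"

definition dc_partition :: "'a set \<Rightarrow> ('a \<Rightarrow> 'a \<Rightarrow> bool) \<Rightarrow> 'a set set \<Rightarrow> bool" where
  "dc_partition V E P \<longleftrightarrow> \<Union>P = V \<and> {} \<notin> P \<and>
     (\<forall>A\<in>P. \<forall>B\<in>P. A \<noteq> B \<longrightarrow> A \<inter> B = {}) \<and>
     (\<forall>A\<in>P. \<exists>B\<in>P. B \<noteq> A \<and> double_coalition V E A B)"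

text \<open>Double coalition number: maximum cardinality of a double coalition partition
  (Sup on nat; 0 if none exists).\<close>
definition DC :: "'a set \<Rightarrow> ('a \<Rightarrow> 'a \<Rightarrow> bool) \<Rightarrow> nat" where
  "DC V E = Sup {card P | P. dc_partition V E P}"

text \<open>ceil(d/2) = (d+1) div 2, floor(d/2) = d div 2; the bound
  ceil(d/2)(D - 2 ceil(d/2) + 2) + 1 + floor(d/2).\<close>
definition dc_bound :: "nat \<Rightarrow> nat \<Rightarrow> nat" where
  "dc_bound d D = ((d + 1) div 2) * (D + 2 - 2 * ((d + 1) div 2)) + 1 + d div 2"

end

theory Submission
  imports Defs "HOL-Library.Countable"
begin

(*
  Fix a vertex v of minimum degree \<delta> and sort the blocks of a double coalition
  partition by how often they meet N[v]: b blocks at least twice, s blocks exactly once and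
  o blocks not at all, so that 2b + s \<le> \<delta> + 1.  A block missing N[v] can only be completed
  to a double dominating set by a block meeting N[v] twice; let a \<le> b be the number of such
  partners used.  A partner X is not double dominating, so some N[w] meets X at most once.
  Every block paired with X then meets N[w] at least 2 - |N[w] \<inter> X| \<ge> 1 times, and every
  other partner together with one of its own companions meets N[w] at least twice.  As
  |N[w]| \<le> \<Delta> + 1, X has at most \<Delta> + 2 - 2a companions, so o \<le> a(\<Delta> + 2 - 2a) and
  |\<Omega>| \<le> \<delta> + 1 - b + a(\<Delta> + 2 - 2a).  For \<Delta> \<ge> 4\<lceil>\<delta>/2\<rceil> - 3 this is largest at
  a = b = \<lceil>\<delta>/2\<rceil>, where it equals the bound.

  For \<delta> = 2k - 1 and any n \<ge> \<delta> the graph constructed below has maximum degree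
  \<Delta> = n + 2k - 2 and a double coalition partition into its kn leaves, as singletons, and
  k colour classes: each class together with any leaf of its colour is double dominating.
  This gives k + kn blocks, which is the bound.
*)

lemma two_le_card: "finite S \<Longrightarrow> a \<in> S \<Longrightarrow> b \<in> S \<Longrightarrow> a \<noteq> b \<Longrightarrow> 2 \<le> card S"
  using card_mono[of S "{a, b}"] by simp

lemma cnbhd_subset: "v \<in> V \<Longrightarrow> cnbhd V E v \<subseteq> V"
  unfolding cnbhd_def nbhd_def by auto

lemma mem_cnbhd: "a \<in> cnbhd V E z \<longleftrightarrow> a = z \<or> (a \<in> V \<and> E z a)"
  unfolding cnbhd_def nbhd_def by auto

lemma card_cnbhd:
  assumes "graph V E" "v \<in> V"
  shows "card (cnbhd V E v) = degree V E v + 1"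
proof -
  have "v \<notin> nbhd V E v" "finite (nbhd V E v)"
    using assms unfolding graph_def nbhd_def by auto
  then show ?thesis unfolding cnbhd_def degree_def by simp
qed

lemma degree_le_max_deg: "graph V E \<Longrightarrow> v \<in> V \<Longrightarrow> degree V E v \<le> max_deg V E"
  unfolding max_deg_def graph_def by simp

lemma min_deg_attained:
  assumes "graph V E"
  obtains v where "v \<in> V" "degree V E v = min_deg V E"
proof -
  have "min_deg V E \<in> degree V E ` V"
    using assms unfolding min_deg_def graph_def by (intro Min_in) auto
  then show ?thesis using that by auto
qed

lemma graphI_root:
  assumes "finite V" "\<And>x y. E x y \<Longrightarrow> x \<in> V \<and> y \<in> V" "\<And>x y. E x y \<Longrightarrow> E y x"
    "\<And>x. \<not> E x x" "\<And>x. x \<in> V \<Longrightarrow> E\<^sup>*\<^sup>* x r" "r \<in> V"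
  shows "graph V E"
proof -
  have "symp E\<^sup>*\<^sup>*" using assms(3) by (intro symp_rtranclp sympI)
  then have "E\<^sup>*\<^sup>* x y" if "x \<in> V" "y \<in> V" for x y
    using assms(5) that by (meson rtranclp_trans sympD)
  then show ?thesis using assms unfolding graph_def by blast
qed

lemma double_coalition_commute: "double_coalition V E U W \<longleftrightarrow> double_coalition V E W U"
  unfolding double_coalition_def by (auto simp: Un_commute)

lemma not_double_dominating_singleton:
  assumes "v \<in> V"
  shows "\<not> double_dominating V E {x}"
proof
  assume "double_dominating V E {x}"
  then have "2 \<le> card (cnbhd V E v \<inter> {x})" using assms unfolding double_dominating_def by blast
  moreover have "card (cnbhd V E v \<inter> {x}) \<le> 1" using card_mono[of "{x}"] by fastforce
  ultimately show False by simp
qed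

lemma double_coalition_cnbhd:
  assumes "double_coalition V E U W" "w \<in> V"
  shows "2 \<le> card (cnbhd V E w \<inter> U) + card (cnbhd V E w \<inter> W)"
proof -
  have "2 \<le> card (cnbhd V E w \<inter> (U \<union> W))"
    using assms unfolding double_coalition_def double_dominating_def by blast
  also have "\<dots> \<le> card (cnbhd V E w \<inter> U) + card (cnbhd V E w \<inter> W)"
    by (simp add: Int_Un_distrib card_Un_le)
  finally show ?thesis .
qed

lemma sum_card_Int_partition:
  assumes "finite V" "\<Union>P = V" "\<forall>A\<in>P. \<forall>B\<in>P. A \<noteq> B \<longrightarrow> A \<inter> B = {}" "M \<subseteq> V"
  shows "(\<Sum>B\<in>P. card (M \<inter> B)) = card M"
proof -
  have "finite P" using assms(1,2) finite_UnionD by blast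
  then have "card (\<Union>B\<in>P. M \<inter> B) = (\<Sum>B\<in>P. card (M \<inter> B))"
    using assms by (intro card_UN_disjoint) (auto intro: finite_subset)
  moreover have "(\<Union>B\<in>P. M \<inter> B) = M" using assms(2,4) by auto
  ultimately show ?thesis by simp
qed

lemma DC_leI:
  assumes "\<And>P. dc_partition V E P \<Longrightarrow> card P \<le> b"
  shows "DC V E \<le> b"
  unfolding DC_def
  by (cases "{card P |P. dc_partition V E P} = {}") (auto intro!: cSup_least assms)

lemma card_le_DC:
  assumes "finite V" "dc_partition V E P"
  shows "card P \<le> DC V E"
  unfolding DC_def
proof (rule cSup_upper)
  have "{card P |P. dc_partition V E P} \<subseteq> card ` Pow (Pow V)"
    unfolding dc_partition_def by auto
  then show "bdd_above {card P |P. dc_partition V E P}"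
    using assms(1) by (meson bdd_above_finite finite_Pow_iff finite_imageI finite_subset)
qed (use assms in auto)

section \<open>The upper bound\<close>

lemma card_Suc_le_sum_partner:
  fixes f :: "'b \<Rightarrow> nat"
  assumes "finite F" "F \<noteq> {}" "x \<le> 1" "\<And>Q. Q \<in> F \<Longrightarrow> 2 \<le> f Q + x"
  shows "card F + 1 \<le> x + sum f F"
proof -
  have "card F * (2 - x) \<le> sum f F"
    using sum_mono[of F "\<lambda>_. 2 - x" f] assms(4) by force
  moreover have "1 \<le> card F" using assms(1,2) by (simp add: Suc_le_eq card_gt_0_iff)
  moreover have "x = 0 \<or> x = 1" using assms(3) by auto
  ultimately show ?thesis by (elim disjE) simp_all
qed

lemma fibre_card_bound:
  fixes f :: "'b \<Rightarrow> nat" and \<pi> :: "'b \<Rightarrow> 'b"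
  assumes "finite P" "Missed \<subseteq> P" "\<pi> ` Missed \<subseteq> P" "\<pi> ` Missed \<inter> Missed = {}"
    and pair: "\<And>Q. Q \<in> Missed \<Longrightarrow> 2 \<le> f Q + f (\<pi> Q)"
    and X: "X \<in> \<pi> ` Missed" "f X \<le> 1"
    and total: "sum f P \<le> D + 1"
  shows "card {Q \<in> Missed. \<pi> Q = X} + 2 * card (\<pi> ` Missed) \<le> D + 2"
proof -
  define A where "A = \<pi> ` Missed"
  define T where "T Y = insert Y {Q \<in> Missed. \<pi> Q = Y}" for Y
  have "finite Missed" using assms(1,2) finite_subset by blast
  then have fin: "finite Missed" "finite A" "finite (T Y)" for Y
    unfolding A_def T_def by auto
  have sum_T: "sum f (T Y) = f Y + (\<Sum>Q | Q \<in> Missed \<and> \<pi> Q = Y. f Q)" if "Y \<in> A" for Y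
    using that fin assms(4) unfolding A_def T_def by (subst sum.insert) auto
  have T_ge_2: "2 \<le> sum f (T Y)" if Y: "Y \<in> A" for Y
  proof -
    obtain Q where "Q \<in> Missed" "\<pi> Q = Y" using Y unfolding A_def by auto
    then have "f Q \<le> (\<Sum>Q | Q \<in> Missed \<and> \<pi> Q = Y. f Q)"
      using fin by (intro member_le_sum) auto
    then show ?thesis using pair[OF \<open>Q \<in> Missed\<close>] sum_T[OF Y] \<open>\<pi> Q = Y\<close> by simp
  qed
  have "2 \<le> f Q + f X" if "Q \<in> {Q \<in> Missed. \<pi> Q = X}" for Q
    using pair[of Q] that by simp
  then have "card {Q \<in> Missed. \<pi> Q = X} + 1 \<le> f X + (\<Sum>Q | Q \<in> Missed \<and> \<pi> Q = X. f Q)"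
    using fin(1) X(1) by (intro card_Suc_le_sum_partner[OF _ _ X(2)]) auto
  then have T_X: "card {Q \<in> Missed. \<pi> Q = X} + 1 \<le> sum f (T X)"
    using sum_T X(1) unfolding A_def by simp
  have "sum f (T X) + (\<Sum>Y\<in>A - {X}. sum f (T Y)) = (\<Sum>Y\<in>A. sum f (T Y))"
    using fin X(1) unfolding A_def by (simp add: sum.remove)
  also have "\<dots> = sum f (\<Union>Y\<in>A. T Y)"
    using fin assms(4) unfolding A_def T_def
    by (intro sum.UNION_disjoint[symmetric]) auto
  also have "\<dots> \<le> sum f P"
    using assms(1-3) unfolding A_def T_def by (intro sum_mono2) auto
  finally have "sum f (T X) + (\<Sum>Y\<in>A - {X}. sum f (T Y)) \<le> D + 1"
    using total by simp
  moreover have "2 * card (A - {X}) \<le> (\<Sum>Y\<in>A - {X}. sum f (T Y))"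
    using sum_mono[of "A - {X}" "\<lambda>_. 2" "\<lambda>Y. sum f (T Y)"] T_ge_2 by simp
  moreover have "card A = card (A - {X}) + 1"
    using card_Suc_Diff1[OF fin(2)] X(1) unfolding A_def by simp
  ultimately show ?thesis using T_X unfolding A_def by linarith
qed

lemma le_dc_bound:
  fixes a b d D :: nat
  assumes "a \<le> b" "2 * b \<le> d + 1" "d \<le> D" "4 * ((d + 1) div 2) \<le> D + 3"
  shows "d + 1 - b + a * (D + 2 - 2 * a) \<le> dc_bound d D"
proof -
  define k where "k = (d + 1) div 2"
  have k: "2 * k = d + 1 \<or> 2 * k = d" "d div 2 = d - k"
    unfolding k_def by presburger+
  have a_k: "a \<le> k" using assms(1,2) unfolding k_def by presburger
  have D_k: "4 * k \<le> D + 3" using assms(4) unfolding k_def .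
  \<comment> \<open>the bound is \<open>g k\<close> for \<open>g x = x (D + 2 - 2x) + d + 1 - x\<close>,
    and \<open>g k - g a = (k - a)(D + 1 - 2k - 2a)\<close>\<close>
  have "int a * (int D + 2 - 2 * int a) + (int k - int a) \<le> int k * (int D + 2 - 2 * int k)"
  proof (cases "a = k")
    case False
    then have "0 \<le> (int k - int a) * (int D + 1 - 2 * int k - 2 * int a)"
      using a_k D_k by (intro mult_nonneg_nonneg) auto
    then show ?thesis by (simp add: algebra_simps)
  qed simp
  moreover have "2 * a \<le> D + 2" "2 * k \<le> D + 2" using k a_k assms(3) by linarith+
  then have "int (d + 1 - b + a * (D + 2 - 2 * a)) = int d + 1 - int b + int a * (int D + 2 - 2 * int a)"
    "int (dc_bound d D) = int k * (int D + 2 - 2 * int k) + 1 + (int d - int k)"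
    using k assms(2) unfolding dc_bound_def k_def[symmetric] by (auto simp: of_nat_diff)
  ultimately show ?thesis using assms(1) by linarith
qed

lemma blocks_meeting_count_le:
  assumes "finite V" "\<Union>P = V" "\<forall>A\<in>P. \<forall>B\<in>P. A \<noteq> B \<longrightarrow> A \<inter> B = {}" "M \<subseteq> V"
  shows "2 * card {B \<in> P. 2 \<le> card (M \<inter> B)} + card {B \<in> P. card (M \<inter> B) = 1} \<le> card M"
proof -
  let ?Twice = "{B \<in> P. 2 \<le> card (M \<inter> B)}" and ?Once = "{B \<in> P. card (M \<inter> B) = 1}"
  have "finite P" using assms(1,2) finite_UnionD by blast
  then have "2 * card ?Twice + card ?Once \<le> (\<Sum>B\<in>?Twice \<union> ?Once. card (M \<inter> B))"
    using sum_mono[of ?Twice "\<lambda>_. 2" "\<lambda>B. card (M \<inter> B)"]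
    by (simp add: sum.union_disjoint disjoint_iff)
  also have "\<dots> \<le> (\<Sum>B\<in>P. card (M \<inter> B))"
    using \<open>finite P\<close> by (intro sum_mono2) auto
  also have "\<dots> = card M"
    using assms by (rule sum_card_Int_partition)
  finally show ?thesis .
qed

lemma dc_partition_outside_partner:
  assumes "dc_partition V E P" "Q \<in> P" "v \<in> V" "cnbhd V E v \<inter> Q = {}"
  obtains B where "B \<in> P" "double_coalition V E Q B" "2 \<le> card (cnbhd V E v \<inter> B)"
proof -
  obtain B where "B \<in> P" "double_coalition V E Q B"
    using assms(1,2) unfolding dc_partition_def by blast
  moreover from this have "2 \<le> card (cnbhd V E v \<inter> B)"
    using double_coalition_cnbhd[OF _ assms(3)] assms(4) by fastforce
  ultimately show ?thesis using that by blast
qed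

lemma dc_partition_fibre_bound:
  assumes "graph V E" "dc_partition V E P" "Missed \<subseteq> P" "\<pi> ` Missed \<subseteq> P" "\<pi> ` Missed \<inter> Missed = {}"
    and coalition: "\<And>Q. Q \<in> Missed \<Longrightarrow> double_coalition V E Q (\<pi> Q)"
    and "X \<in> \<pi> ` Missed"
  shows "card {Q \<in> Missed. \<pi> Q = X} + 2 * card (\<pi> ` Missed) \<le> max_deg V E + 2"
proof -
  have "X \<subseteq> V" "\<not> double_dominating V E X"
    using assms(2,4,7) coalition unfolding dc_partition_def double_coalition_def by auto
  then obtain w where w: "w \<in> V" "card (cnbhd V E w \<inter> X) \<le> 1"
    unfolding double_dominating_def by force
  have "finite V" "\<Union>P = V" "\<forall>A\<in>P. \<forall>B\<in>P. A \<noteq> B \<longrightarrow> A \<inter> B = {}"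
    using assms(1,2) unfolding graph_def dc_partition_def by auto
  moreover from this have "finite P" using finite_UnionD by blast
  ultimately have "(\<Sum>B\<in>P. card (cnbhd V E w \<inter> B)) \<le> max_deg V E + 1"
    using sum_card_Int_partition[OF _ _ _ cnbhd_subset[OF w(1)]] card_cnbhd[OF assms(1) w(1)]
      degree_le_max_deg[OF assms(1) w(1)] by simp
  then show ?thesis
    using fibre_card_bound[where f = "\<lambda>B. card (cnbhd V E w \<inter> B)"] \<open>finite P\<close> assms(3-5,7) w
      double_coalition_cnbhd[OF coalition w(1)] by blast
qed

lemma card_blocks_missing_cnbhd:
  assumes G: "graph V E" and P: "dc_partition V E P" and "v \<in> V"
  obtains a where "a \<le> card {B \<in> P. 2 \<le> card (cnbhd V E v \<inter> B)}"
    "card {B \<in> P. cnbhd V E v \<inter> B = {}} \<le> a * (max_deg V E + 2 - 2 * a)"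
proof -
  define Twice where "Twice = {B \<in> P. 2 \<le> card (cnbhd V E v \<inter> B)}"
  define Missed where "Missed = {B \<in> P. cnbhd V E v \<inter> B = {}}"
  have "finite P" using G P finite_UnionD unfolding graph_def dc_partition_def by metis
  have "\<forall>Q\<in>Missed. \<exists>B. B \<in> Twice \<and> double_coalition V E Q B"
    using dc_partition_outside_partner[OF P _ \<open>v \<in> V\<close>] unfolding Missed_def Twice_def by blast
  then obtain \<pi> where \<pi>: "\<And>Q. Q \<in> Missed \<Longrightarrow> \<pi> Q \<in> Twice \<and> double_coalition V E Q (\<pi> Q)"
    by metis
  define a where "a = card (\<pi> ` Missed)"
  have "\<pi> ` Missed \<subseteq> Twice" "\<pi> ` Missed \<inter> Missed = {}"
    using \<pi> unfolding Twice_def Missed_def by fastforce+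
  then have fibre: "card {Q \<in> Missed. \<pi> Q = X} \<le> max_deg V E + 2 - 2 * a" if "X \<in> \<pi> ` Missed" for X
    using dc_partition_fibre_bound[OF G P _ _ _ _ that] \<pi> unfolding a_def Missed_def Twice_def
    by fastforce
  have "card Missed = card (\<Union>X\<in>\<pi> ` Missed. {Q \<in> Missed. \<pi> Q = X})"
    by (rule arg_cong[where f = card]) auto
  also have "\<dots> \<le> (\<Sum>X\<in>\<pi> ` Missed. card {Q \<in> Missed. \<pi> Q = X})"
    using \<open>finite P\<close> unfolding Missed_def by (intro card_UN_le) simp
  also have "\<dots> \<le> a * (max_deg V E + 2 - 2 * a)"
    using sum_mono[OF fibre] unfolding a_def by simp
  finally have "card Missed \<le> a * (max_deg V E + 2 - 2 * a)" .
  moreover have "a \<le> card Twice"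
    using \<open>\<pi> ` Missed \<subseteq> Twice\<close> \<open>finite P\<close> unfolding a_def Twice_def by (simp add: card_mono)
  ultimately show ?thesis using that unfolding Twice_def Missed_def by blast
qed

lemma card_dc_partition_le_dc_bound:
  assumes G: "graph V E" and D: "4 * ((min_deg V E + 1) div 2) \<le> max_deg V E + 3"
    and P: "dc_partition V E P"
  shows "card P \<le> dc_bound (min_deg V E) (max_deg V E)"
proof -
  obtain v where v: "v \<in> V" "degree V E v = min_deg V E"
    using min_deg_attained[OF G] .
  define N where "N = cnbhd V E v"
  define Twice where "Twice = {B \<in> P. 2 \<le> card (N \<inter> B)}"
  define Once where "Once = {B \<in> P. card (N \<inter> B) = 1}"
  define Missed where "Missed = {B \<in> P. N \<inter> B = {}}"
  have partition: "finite V" "\<Union>P = V" "\<forall>A\<in>P. \<forall>B\<in>P. A \<noteq> B \<longrightarrow> A \<inter> B = {}"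
    using G P unfolding graph_def dc_partition_def by auto
  have N: "N \<subseteq> V" "card N = min_deg V E + 1"
    using cnbhd_subset[OF v(1)] card_cnbhd[OF G v(1)] v(2) unfolding N_def by auto
  have "finite P" "finite N" using partition N(1) finite_UnionD finite_subset by blast+
  then have "B \<in> Twice \<union> Once \<union> Missed" if "B \<in> P" for B
    using that unfolding Twice_def Once_def Missed_def by (cases "card (N \<inter> B)") auto
  then have "P = Twice \<union> Once \<union> Missed" unfolding Twice_def Once_def Missed_def by blast
  moreover have "finite Twice" "finite Once" "finite Missed"
    using \<open>finite P\<close> unfolding Twice_def Once_def Missed_def by auto
  moreover have "Twice \<inter> Once = {}" "(Twice \<union> Once) \<inter> Missed = {}"
    unfolding Twice_def Once_def Missed_def by auto
  ultimately have "card P = card Twice + card Once + card Missed"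
    by (simp add: card_Un_disjoint)
  moreover have "2 * card Twice + card Once \<le> min_deg V E + 1"
    using blocks_meeting_count_le[OF partition N(1)] N(2) unfolding Twice_def Once_def by simp
  moreover obtain a where "a \<le> card Twice" "card Missed \<le> a * (max_deg V E + 2 - 2 * a)"
    using card_blocks_missing_cnbhd[OF G P v(1)] unfolding Twice_def Missed_def N_def .
  moreover have "min_deg V E \<le> max_deg V E"
    using degree_le_max_deg[OF G v(1)] v(2) by simp
  ultimately show ?thesis
    using le_dc_bound[of a "card Twice" "min_deg V E" "max_deg V E"] D by linarith
qed

lemma DC_le_dc_bound:
  assumes "graph V E" "4 * ((min_deg V E + 1) div 2) \<le> max_deg V E + 3"
  shows "DC V E \<le> dc_bound (min_deg V E) (max_deg V E)"
  using card_dc_partition_le_dc_bound[OF assms] by (rule DC_leI)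

section \<open>Copies along injections\<close>

definition map_adj :: "('a \<Rightarrow> 'b) \<Rightarrow> ('a \<Rightarrow> 'a \<Rightarrow> bool) \<Rightarrow> 'b \<Rightarrow> 'b \<Rightarrow> bool" where
  "map_adj f E x y \<longleftrightarrow> (\<exists>a b. x = f a \<and> y = f b \<and> E a b)"

lemma map_adj_apply: "inj f \<Longrightarrow> map_adj f E (f a) (f b) \<longleftrightarrow> E a b"
  unfolding map_adj_def by (auto dest: injD)

lemma cnbhd_map_adj: "inj f \<Longrightarrow> cnbhd (f ` V) (map_adj f E) (f a) = f ` cnbhd V E a"
  and nbhd_map_adj: "inj f \<Longrightarrow> nbhd (f ` V) (map_adj f E) (f a) = f ` nbhd V E a"
  unfolding cnbhd_def nbhd_def by (auto simp: map_adj_apply)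

lemma degree_map_adj: "inj f \<Longrightarrow> degree (f ` V) (map_adj f E) (f a) = degree V E a"
  unfolding degree_def nbhd_map_adj by (simp add: card_image inj_on_subset)

lemma min_deg_map_adj: "inj f \<Longrightarrow> min_deg (f ` V) (map_adj f E) = min_deg V E"
  and max_deg_map_adj: "inj f \<Longrightarrow> max_deg (f ` V) (map_adj f E) = max_deg V E"
  unfolding min_deg_def max_deg_def by (simp_all add: image_image degree_map_adj)

lemma double_dominating_map_adj:
  assumes "inj f" "S \<subseteq> V"
  shows "double_dominating (f ` V) (map_adj f E) (f ` S) \<longleftrightarrow> double_dominating V E S"
proof -
  have "card (cnbhd (f ` V) (map_adj f E) (f a) \<inter> f ` S) = card (cnbhd V E a \<inter> S)" for a
    using assms(1) by (simp add: cnbhd_map_adj image_Int[symmetric] card_image inj_on_subset)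
  then show ?thesis unfolding double_dominating_def using assms by auto
qed

lemma double_coalition_map_adj:
  assumes "inj f" "U \<subseteq> V" "W \<subseteq> V"
  shows "double_coalition (f ` V) (map_adj f E) (f ` U) (f ` W) \<longleftrightarrow> double_coalition V E U W"
proof -
  have "f ` U \<union> f ` W = f ` (U \<union> W)" "f ` U \<inter> f ` W = {} \<longleftrightarrow> U \<inter> W = {}"
    using assms(1) by (auto simp: image_Int[symmetric])
  then show ?thesis
    unfolding double_coalition_def using assms by (simp add: double_dominating_map_adj)
qed

lemma dc_partition_map_adj:
  assumes "inj f" "dc_partition V E P"
  shows "dc_partition (f ` V) (map_adj f E) (image f ` P)"
proof -
  have sub: "B \<subseteq> V" if "B \<in> P" for B using assms(2) that unfolding dc_partition_def by blast
  have inj_image: "f ` A = f ` B \<longleftrightarrow> A = B" for A B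
    using assms(1) by (simp add: inj_image_eq_iff)
  show ?thesis
    using assms(2) unfolding dc_partition_def
    by (auto simp: image_Int[OF assms(1), symmetric] inj_image double_coalition_map_adj[OF assms(1) sub sub])
qed

lemma graph_map_adj:
  assumes "inj f" "graph V E"
  shows "graph (f ` V) (map_adj f E)"
proof -
  have G: "finite V" "V \<noteq> {}" "\<forall>x y. E x y \<longrightarrow> x \<in> V \<and> y \<in> V" "\<forall>x y. E x y \<longrightarrow> E y x"
    "\<forall>x. \<not> E x x" "\<forall>x\<in>V. \<forall>y\<in>V. E\<^sup>*\<^sup>* x y"
    using assms(2) unfolding graph_def by blast+
  have reach: "(map_adj f E)\<^sup>*\<^sup>* (f a) (f b)" if "E\<^sup>*\<^sup>* a b" for a b
    using that by induction (auto intro: rtranclp.rtrancl_into_rtrancl simp: map_adj_apply[OF assms(1)])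
  show ?thesis
    unfolding graph_def
  proof (intro conjI)
    show "\<forall>x. \<not> map_adj f E x x"
      using G(5) assms(1) unfolding map_adj_def by (auto dest: injD)
    show "\<forall>x\<in>f ` V. \<forall>y\<in>f ` V. (map_adj f E)\<^sup>*\<^sup>* x y"
      using G(6) reach by blast
    show "\<forall>x y. map_adj f E x y \<longrightarrow> x \<in> f ` V \<and> y \<in> f ` V"
      "\<forall>x y. map_adj f E x y \<longrightarrow> map_adj f E y x"
      using G(3,4) unfolding map_adj_def by blast+
  qed (use G(1,2) in auto)
qed

lemma countable_graph_nat_copy:
  fixes V :: "'a :: countable set"
  assumes "graph V E" "dc_partition V E P"
  obtains V' :: "nat set" and E' where "graph V' E'" "min_deg V' E' = min_deg V E"
    "max_deg V' E' = max_deg V E" "card P \<le> DC V' E'"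
proof
  let ?f = "to_nat :: 'a \<Rightarrow> nat"
  have "inj ?f" by simp
  show "graph (?f ` V) (map_adj ?f E)" by (rule graph_map_adj[OF \<open>inj ?f\<close> assms(1)])
  show "min_deg (?f ` V) (map_adj ?f E) = min_deg V E" "max_deg (?f ` V) (map_adj ?f E) = max_deg V E"
    using \<open>inj ?f\<close> by (rule min_deg_map_adj, rule max_deg_map_adj)
  have "card P = card (image ?f ` P)"
    using \<open>inj ?f\<close> by (simp add: card_image inj_on_def inj_image_eq_iff)
  also have "\<dots> \<le> DC (?f ` V) (map_adj ?f E)"
    using assms unfolding graph_def by (intro card_le_DC dc_partition_map_adj[OF \<open>inj ?f\<close>]) auto
  finally show "card P \<le> DC (?f ` V) (map_adj ?f E)" .
qed

section \<open>The extremal graphs\<close>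

text \<open>For \<open>k \<ge> 2\<close> and \<open>n \<ge> 2k - 1\<close> the graph has, for every \<open>j < k\<close>, a clique
  \<open>K\<^sub>j\<close> of order \<open>2k - 1\<close> formed by the hub \<open>Hub j\<close> and the vertices \<open>Clq j i e\<close>
  (\<open>i \<noteq> j\<close>, \<open>e < 2\<close>), together with \<open>n\<close> vertices \<open>Leaf j m\<close> joined to all of \<open>K\<^sub>j\<close>.
  Two further cliques \<open>{Aux c j e}\<close> of order \<open>2k\<close> (\<open>c < 2\<close>) give the leaves one more
  neighbour each and make the graph connected.  The degrees range from \<open>2k - 1\<close>, attained
  by \<open>Aux 1 1 0\<close>, to \<open>n + 2k - 2\<close>, attained by the hubs.\<close>

datatype vtx = Hub nat | Leaf nat nat | Clq nat nat nat | Aux nat nat nat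

instance vtx :: countable by countable_datatype

fun sharp_vert :: "nat \<Rightarrow> nat \<Rightarrow> vtx \<Rightarrow> bool" where
  "sharp_vert k n (Hub j) \<longleftrightarrow> j < k"
| "sharp_vert k n (Leaf j m) \<longleftrightarrow> j < k \<and> m < n"
| "sharp_vert k n (Clq j i e) \<longleftrightarrow> j < k \<and> i < k \<and> i \<noteq> j \<and> e < 2"
| "sharp_vert k n (Aux c j e) \<longleftrightarrow> c < 2 \<and> j < k \<and> e < 2"

definition sharp_V :: "nat \<Rightarrow> nat \<Rightarrow> vtx set" where
  "sharp_V k n = {x. sharp_vert k n x}"

fun sharp_adj :: "nat \<Rightarrow> nat \<Rightarrow> vtx \<Rightarrow> vtx \<Rightarrow> bool" where
  "sharp_adj k n (Hub j) (Leaf j' m) \<longleftrightarrow> j' = j \<and> j < k \<and> m < n"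
| "sharp_adj k n (Hub j) (Clq j' i e) \<longleftrightarrow> j' = j \<and> sharp_vert k n (Clq j i e)"
| "sharp_adj k n (Clq j i e) (Clq j' i' e') \<longleftrightarrow>
     j' = j \<and> sharp_vert k n (Clq j i e) \<and> sharp_vert k n (Clq j i' e') \<and> (i, e) \<noteq> (i', e')"
| "sharp_adj k n (Leaf j m) (Clq j' i e) \<longleftrightarrow> j' = j \<and> m < n \<and> sharp_vert k n (Clq j i e)"
| "sharp_adj k n (Leaf j m) (Aux c j' e) \<longleftrightarrow> j < k \<and> m < n \<and>
     ((c = 0 \<and> j' = j \<and> e = (if m = 0 then 1 else 0)) \<or> (c = 1 \<and> j = 0 \<and> m = 0 \<and> j' = 0 \<and> e = 0))"
| "sharp_adj k n (Aux c j e) (Aux c' j' e') \<longleftrightarrow>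
     c' = c \<and> sharp_vert k n (Aux c j e) \<and> sharp_vert k n (Aux c j' e') \<and> (j, e) \<noteq> (j', e')"
| "sharp_adj k n _ _ \<longleftrightarrow> False"

definition sharp_E :: "nat \<Rightarrow> nat \<Rightarrow> vtx \<Rightarrow> vtx \<Rightarrow> bool" where
  "sharp_E k n x y \<longleftrightarrow> sharp_adj k n x y \<or> sharp_adj k n y x"

definition leaves :: "nat \<Rightarrow> nat \<Rightarrow> vtx set" where
  "leaves n j = Leaf j ` {..<n}"

definition clique_rest :: "nat \<Rightarrow> nat \<Rightarrow> vtx set" where
  "clique_rest k j = (\<lambda>(i, e). Clq j i e) ` (({..<k} - {j}) \<times> {..<2})"

definition aux_clique :: "nat \<Rightarrow> nat \<Rightarrow> vtx set" where
  "aux_clique k c = (\<lambda>(j, e). Aux c j e) ` ({..<k} \<times> {..<2})"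

lemma mem_leaves [simp]: "x \<in> leaves n j \<longleftrightarrow> (\<exists>m. x = Leaf j m \<and> m < n)"
  unfolding leaves_def by auto

lemma mem_clique_rest [simp]:
  "x \<in> clique_rest k j \<longleftrightarrow> (\<exists>i e. x = Clq j i e \<and> i < k \<and> i \<noteq> j \<and> e < 2)"
  unfolding clique_rest_def by force

lemma mem_aux_clique [simp]: "x \<in> aux_clique k c \<longleftrightarrow> (\<exists>j e. x = Aux c j e \<and> j < k \<and> e < 2)"
  unfolding aux_clique_def by force

lemma finite_leaves [simp]: "finite (leaves n j)"
  and finite_clique_rest [simp]: "finite (clique_rest k j)"
  and finite_aux_clique [simp]: "finite (aux_clique k c)"
  unfolding leaves_def clique_rest_def aux_clique_def by auto

lemma card_leaves: "card (leaves n j) = n"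
  unfolding leaves_def by (simp add: card_image inj_on_def)

lemma card_clique_rest: "j < k \<Longrightarrow> card (clique_rest k j) = 2 * (k - 1)"
  unfolding clique_rest_def
  by (subst card_image) (auto simp: inj_on_def card_cartesian_product)

lemma card_aux_clique: "card (aux_clique k c) = 2 * k"
  unfolding aux_clique_def
  by (subst card_image) (auto simp: inj_on_def card_cartesian_product)

lemma finite_sharp_V: "finite (sharp_V k n)"
proof -
  have "sharp_V k n \<subseteq> Hub ` {..<k} \<union> (\<Union>j<k. leaves n j \<union> clique_rest k j) \<union>
      aux_clique k 0 \<union> aux_clique k 1"
  proof
    fix x assume "x \<in> sharp_V k n"
    then show "x \<in> Hub ` {..<k} \<union> (\<Union>j<k. leaves n j \<union> clique_rest k j) \<union>
        aux_clique k 0 \<union> aux_clique k 1"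
      by (cases x) (auto simp: sharp_V_def less_2_cases_iff)
  qed
  then show ?thesis by (rule finite_subset) auto
qed

lemma sharp_E_in_V: "sharp_E k n x y \<Longrightarrow> x \<in> sharp_V k n \<and> y \<in> sharp_V k n"
  unfolding sharp_E_def sharp_V_def by (cases x; cases y) auto

lemma sharp_E_sym: "sharp_E k n x y \<Longrightarrow> sharp_E k n y x"
  unfolding sharp_E_def by auto

lemma sharp_E_irrefl: "\<not> sharp_E k n x x"
  unfolding sharp_E_def by (cases x) auto

lemma sharp_reach_Leaf_0_0:
  assumes "0 < n" "x \<in> sharp_V k n"
  shows "(sharp_E k n)\<^sup>*\<^sup>* x (Leaf 0 0)"
proof -
  let ?E = "sharp_E k n"
  have edge: "?E a b \<Longrightarrow> ?E\<^sup>*\<^sup>* b c \<Longrightarrow> ?E\<^sup>*\<^sup>* a c" for a b c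
    by (rule converse_rtranclp_into_rtranclp)
  have Aux: "?E\<^sup>*\<^sup>* (Aux c j e) (Leaf 0 0)" if "sharp_vert k n (Aux c j e)" for c j e
  proof -
    \<comment> \<open>\<open>Aux c 0 (1 - c)\<close> is the neighbour of \<open>Leaf 0 0\<close> in the clique \<open>c\<close>\<close>
    have "?E (Aux c 0 (1 - c)) (Leaf 0 0)"
      using that assms(1) by (auto simp: sharp_E_def less_2_cases_iff)
    moreover have "?E (Aux c j e) (Aux c 0 (1 - c))" if "(j, e) \<noteq> (0, 1 - c)"
      using that \<open>sharp_vert k n (Aux c j e)\<close> by (auto simp: sharp_E_def)
    ultimately show ?thesis by (cases "(j, e) = (0, 1 - c)") (auto intro: edge)
  qed
  have Hub: "?E\<^sup>*\<^sup>* (Hub j) (Leaf 0 0)" if "j < k" for j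
    using that assms(1) Aux[of 0 j 1]
    by (auto intro!: edge[of "Hub j" "Leaf j 0"] edge[of "Leaf j 0" "Aux 0 j 1"] simp: sharp_E_def)
  show ?thesis
  proof (cases x)
    case (Leaf j m)
    then show ?thesis
      using assms Hub[of j] by (auto intro!: edge[of _ "Hub j"] simp: sharp_E_def sharp_V_def)
  next
    case (Clq j i e)
    then show ?thesis
      using assms Hub[of j] by (auto intro!: edge[of _ "Hub j"] simp: sharp_E_def sharp_V_def)
  qed (use assms Aux Hub in \<open>auto simp: sharp_V_def\<close>)
qed

lemma graph_sharp:
  assumes "0 < k" "0 < n"
  shows "graph (sharp_V k n) (sharp_E k n)"
proof (rule graphI_root)
  show "Leaf 0 0 \<in> sharp_V k n" using assms by (simp add: sharp_V_def)
qed (use finite_sharp_V sharp_E_in_V sharp_E_sym sharp_E_irrefl sharp_reach_Leaf_0_0[OF assms(2)] in auto)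

abbreviation sharp_nbhd :: "nat \<Rightarrow> nat \<Rightarrow> vtx \<Rightarrow> vtx set" where
  "sharp_nbhd k n \<equiv> nbhd (sharp_V k n) (sharp_E k n)"

abbreviation sharp_degree :: "nat \<Rightarrow> nat \<Rightarrow> vtx \<Rightarrow> nat" where
  "sharp_degree k n \<equiv> degree (sharp_V k n) (sharp_E k n)"

lemma sharp_nbhd_Hub: "j < k \<Longrightarrow> sharp_nbhd k n (Hub j) = leaves n j \<union> clique_rest k j"
  apply (rule set_eqI)
  subgoal for x by (cases x) (auto simp: nbhd_def sharp_E_def sharp_V_def)
  done

lemma sharp_nbhd_Clq:
  "sharp_vert k n (Clq j i e) \<Longrightarrow>
    sharp_nbhd k n (Clq j i e) = insert (Hub j) (leaves n j \<union> (clique_rest k j - {Clq j i e}))"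
  apply (rule set_eqI)
  subgoal for x by (cases x) (auto simp: nbhd_def sharp_E_def sharp_V_def)
  done

lemma sharp_nbhd_Leaf:
  "j < k \<Longrightarrow> m < n \<Longrightarrow> sharp_nbhd k n (Leaf j m) = insert (Hub j) (clique_rest k j \<union>
    {Aux 0 j (if m = 0 then 1 else 0)} \<union> (if j = 0 \<and> m = 0 then {Aux 1 0 0} else {}))"
  apply (rule set_eqI)
  subgoal for x by (cases x) (auto simp: nbhd_def sharp_E_def sharp_V_def)
  done

lemma sharp_nbhd_Aux_subset:
  "sharp_vert k n (Aux c j e) \<Longrightarrow> sharp_nbhd k n (Aux c j e) \<subseteq>
    (aux_clique k c - {Aux c j e}) \<union> (leaves n j - {Leaf j (if c = 0 \<and> e = 0 then 0 else 1)})"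
  apply (rule subsetI)
  subgoal for x by (cases x) (auto simp: nbhd_def sharp_E_def sharp_V_def split: if_splits)
  done

lemma aux_clique_subset_sharp_nbhd:
  "sharp_vert k n (Aux c j e) \<Longrightarrow> aux_clique k c - {Aux c j e} \<subseteq> sharp_nbhd k n (Aux c j e)"
  by (auto simp: nbhd_def sharp_E_def sharp_V_def)

lemma sharp_nbhd_Aux_1_1_0: "1 < k \<Longrightarrow> sharp_nbhd k n (Aux 1 1 0) = aux_clique k 1 - {Aux 1 1 0}"
  apply (rule set_eqI)
  subgoal for x by (cases x) (auto simp: nbhd_def sharp_E_def sharp_V_def)
  done

lemma sharp_degree_Hub: "j < k \<Longrightarrow> sharp_degree k n (Hub j) = n + 2 * (k - 1)"
  unfolding degree_def sharp_nbhd_Hub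
  by (subst card_Un_disjoint) (auto simp: card_leaves card_clique_rest)

lemma sharp_degree_Clq:
  assumes "sharp_vert k n (Clq j i e)"
  shows "sharp_degree k n (Clq j i e) = n + 2 * (k - 1)"
proof -
  have "Clq j i e \<in> clique_rest k j" "j < k" using assms by auto
  then have "card (clique_rest k j - {Clq j i e}) = 2 * (k - 1) - 1" "1 \<le> 2 * (k - 1)"
    using card_clique_rest[of j k] by auto
  moreover have "card (leaves n j \<union> (clique_rest k j - {Clq j i e})) =
      card (leaves n j) + card (clique_rest k j - {Clq j i e})"
    by (rule card_Un_disjoint) auto
  ultimately show ?thesis
    unfolding degree_def sharp_nbhd_Clq[OF assms] by (simp add: card_leaves)
qed

lemma sharp_degree_Leaf:
  assumes "j < k" "m < n"
  shows "2 * k - 1 \<le> sharp_degree k n (Leaf j m)" "sharp_degree k n (Leaf j m) \<le> 2 * k + 1"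
proof -
  define a where "a = Aux 0 j (if m = 0 then 1 else 0)"
  have N: "insert (Hub j) (clique_rest k j) \<subseteq> sharp_nbhd k n (Leaf j m)"
    "sharp_nbhd k n (Leaf j m) \<subseteq> insert (Hub j) (clique_rest k j \<union> {a, Aux 1 0 0})"
    unfolding sharp_nbhd_Leaf[OF assms] a_def by auto
  have "finite (sharp_nbhd k n (Leaf j m))" using N(2) by (rule finite_subset) simp
  then have "card (insert (Hub j) (clique_rest k j)) \<le> sharp_degree k n (Leaf j m)"
    unfolding degree_def using N(1) by (rule card_mono)
  then show "2 * k - 1 \<le> sharp_degree k n (Leaf j m)"
    using card_clique_rest[OF assms(1)] assms(1) by simp
  have "sharp_degree k n (Leaf j m) \<le> card (insert (Hub j) (clique_rest k j \<union> {a, Aux 1 0 0}))"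
    unfolding degree_def using N(2) by (intro card_mono) auto
  moreover have "\<dots> \<le> Suc (card (clique_rest k j) + card {a, Aux 1 0 0})"
    using card_Un_le[of "clique_rest k j" "{a, Aux 1 0 0}"] by (simp add: card_insert_if)
  moreover have "card {a, Aux 1 0 0} \<le> 2"
    by (cases "a = Aux 1 0 0") simp_all
  ultimately show "sharp_degree k n (Leaf j m) \<le> 2 * k + 1"
    using card_clique_rest[OF assms(1)] assms(1) by linarith
qed

lemma sharp_degree_Aux:
  assumes "sharp_vert k n (Aux c j e)" "2 \<le> n"
  shows "2 * k - 1 \<le> sharp_degree k n (Aux c j e)" "sharp_degree k n (Aux c j e) \<le> n + 2 * k - 2"
proof -
  have card_clique: "card (aux_clique k c - {Aux c j e}) = 2 * k - 1"
    using assms card_aux_clique[of k c] by simp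
  have "finite (sharp_nbhd k n (Aux c j e))"
    using finite_sharp_V unfolding nbhd_def by auto
  then show "2 * k - 1 \<le> sharp_degree k n (Aux c j e)"
    unfolding degree_def using card_mono aux_clique_subset_sharp_nbhd[OF assms(1)] card_clique
    by metis
  define q :: nat where "q = (if c = 0 \<and> e = 0 then 0 else 1)"
  have "sharp_degree k n (Aux c j e) \<le> card ((aux_clique k c - {Aux c j e}) \<union> (leaves n j - {Leaf j q}))"
    unfolding degree_def q_def by (rule card_mono[OF _ sharp_nbhd_Aux_subset[OF assms(1)]]) simp
  also have "\<dots> \<le> card (aux_clique k c - {Aux c j e}) + card (leaves n j - {Leaf j q})"
    by (rule card_Un_le)
  also have "card (leaves n j - {Leaf j q}) = n - 1"
    using assms(2) by (simp add: card_leaves q_def)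
  finally show "sharp_degree k n (Aux c j e) \<le> n + 2 * k - 2"
    using card_clique assms by simp
qed

lemma sharp_degree_Aux_1_1_0: "1 < k \<Longrightarrow> sharp_degree k n (Aux 1 1 0) = 2 * k - 1"
  unfolding degree_def sharp_nbhd_Aux_1_1_0 using card_aux_clique[of k 1] by simp

lemma sharp_degree_bounds:
  assumes "2 \<le> k" "2 * k - 1 \<le> n" "x \<in> sharp_V k n"
  shows "2 * k - 1 \<le> sharp_degree k n x \<and> sharp_degree k n x \<le> n + 2 * k - 2"
proof (cases x)
  case (Leaf j m)
  then show ?thesis
    using assms sharp_degree_Leaf[of j k m n] by (auto simp: sharp_V_def)
next
  case (Aux c j e)
  moreover have "2 \<le> n" using assms(1,2) by linarith
  ultimately show ?thesis
    using assms sharp_degree_Aux[of k n c j e] by (auto simp: sharp_V_def)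
next
  case (Hub j)
  then show ?thesis
    using assms sharp_degree_Hub[of j k n] by (auto simp: sharp_V_def)
next
  case (Clq j i e)
  then show ?thesis
    using assms sharp_degree_Clq[of k n j i e] by (auto simp: sharp_V_def)
qed

lemma min_deg_sharp:
  assumes "2 \<le> k" "2 * k - 1 \<le> n"
  shows "min_deg (sharp_V k n) (sharp_E k n) = 2 * k - 1"
  unfolding min_deg_def
proof (rule Min_eqI)
  have "Aux 1 1 0 \<in> sharp_V k n" "sharp_degree k n (Aux 1 1 0) = 2 * k - 1"
    using assms(1) sharp_degree_Aux_1_1_0 by (simp_all add: sharp_V_def)
  then show "2 * k - 1 \<in> sharp_degree k n ` sharp_V k n"
    by (metis image_eqI)
  show "finite (sharp_degree k n ` sharp_V k n)" using finite_sharp_V by simp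
  show "2 * k - 1 \<le> y" if "y \<in> sharp_degree k n ` sharp_V k n" for y
    using that sharp_degree_bounds[OF assms] by blast
qed

lemma max_deg_sharp:
  assumes "2 \<le> k" "2 * k - 1 \<le> n"
  shows "max_deg (sharp_V k n) (sharp_E k n) = n + 2 * k - 2"
  unfolding max_deg_def
proof (rule Max_eqI)
  have "Hub 0 \<in> sharp_V k n" "sharp_degree k n (Hub 0) = n + 2 * k - 2"
    using assms(1) sharp_degree_Hub[of 0 k n] by (simp_all add: sharp_V_def)
  then show "n + 2 * k - 2 \<in> sharp_degree k n ` sharp_V k n"
    by (metis image_eqI)
  show "finite (sharp_degree k n ` sharp_V k n)" using finite_sharp_V by simp
  show "y \<le> n + 2 * k - 2" if "y \<in> sharp_degree k n ` sharp_V k n" for y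
    using that sharp_degree_bounds[OF assms] by blast
qed

fun colour :: "vtx \<Rightarrow> nat" where
  "colour (Hub j) = j"
| "colour (Leaf j m) = j"
| "colour (Clq j i e) = i"
| "colour (Aux c j e) = j"

definition colour_class :: "nat \<Rightarrow> nat \<Rightarrow> nat \<Rightarrow> vtx set" where
  "colour_class k n i = {x \<in> sharp_V k n. (\<forall>j m. x \<noteq> Leaf j m) \<and> colour x = i}"

definition sharp_partition :: "nat \<Rightarrow> nat \<Rightarrow> vtx set set" where
  "sharp_partition k n = colour_class k n ` {..<k} \<union> (\<lambda>(j, m). {Leaf j m}) ` ({..<k} \<times> {..<n})"

lemma Hub_in_colour_class: "i < k \<Longrightarrow> Hub i \<in> colour_class k n i"
  by (simp add: colour_class_def sharp_V_def)

lemma double_dominating_colour_class_Leaf: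
  assumes "i < k" "m < n" "2 \<le> k"
  shows "double_dominating (sharp_V k n) (sharp_E k n) (colour_class k n i \<union> {Leaf i m})"
  unfolding double_dominating_def
proof (intro conjI ballI)
  show "colour_class k n i \<union> {Leaf i m} \<subseteq> sharp_V k n"
    using assms by (auto simp: colour_class_def sharp_V_def)
  fix z assume z: "z \<in> sharp_V k n"
  define S where "S = cnbhd (sharp_V k n) (sharp_E k n) z \<inter> (colour_class k n i \<union> {Leaf i m})"
  have "finite S" unfolding S_def cnbhd_def nbhd_def using finite_sharp_V by auto
  have mem_S: "a \<in> S \<longleftrightarrow> (a = z \<or> (a \<in> sharp_V k n \<and> sharp_E k n z a)) \<and>
      (a \<in> colour_class k n i \<or> a = Leaf i m)" for a
    by (simp only: S_def Int_iff mem_cnbhd Un_iff singleton_iff)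
  note two = two_le_card[OF \<open>finite S\<close>]
  have "2 \<le> card S"
  proof (cases z)
    case (Hub j)
    then show ?thesis
      using z assms two[of "Hub i" "Leaf i m"] two[of "Clq j i 0" "Clq j i 1"]
      by (cases "j = i") (auto simp: mem_S sharp_E_def sharp_V_def colour_class_def)
  next
    case (Clq j i' e)
    then show ?thesis
      using z assms two[of "Clq j i e" "Clq j i (1 - e)"] two[of "Hub i" "Leaf i m"]
        two[of "Clq j i 0" "Clq j i 1"]
      by (cases "i' = i"; cases "j = i")
        (auto simp: mem_S sharp_E_def sharp_V_def colour_class_def less_2_cases_iff)
  next
    case (Leaf j m')
    then show ?thesis
      using z assms two[of "Hub i" "Aux 0 i (if m' = 0 then 1 else 0)"] two[of "Clq j i 0" "Clq j i 1"]
      by (cases "j = i") (auto simp: mem_S sharp_E_def sharp_V_def colour_class_def)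
  next
    case (Aux c j e)
    then show ?thesis
      using z assms two[of "Aux c i e" "Aux c i (1 - e)"] two[of "Aux c i 0" "Aux c i 1"]
      by (cases "j = i") (auto simp: mem_S sharp_E_def sharp_V_def colour_class_def less_2_cases_iff)
  qed
  then show "2 \<le> card (cnbhd (sharp_V k n) (sharp_E k n) z \<inter> (colour_class k n i \<union> {Leaf i m}))"
    unfolding S_def .
qed

lemma not_double_dominating_colour_class:
  assumes "i < k"
  shows "\<not> double_dominating (sharp_V k n) (sharp_E k n) (colour_class k n i)"
proof
  assume "double_dominating (sharp_V k n) (sharp_E k n) (colour_class k n i)"
  moreover have "Hub i \<in> sharp_V k n" using assms by (simp add: sharp_V_def)
  ultimately have "2 \<le> card (cnbhd (sharp_V k n) (sharp_E k n) (Hub i) \<inter> colour_class k n i)"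
    unfolding double_dominating_def by blast
  moreover have "cnbhd (sharp_V k n) (sharp_E k n) (Hub i) \<inter> colour_class k n i \<subseteq> {Hub i}"
  proof
    fix a assume "a \<in> cnbhd (sharp_V k n) (sharp_E k n) (Hub i) \<inter> colour_class k n i"
    then show "a \<in> {Hub i}"
      by (cases a) (auto simp: mem_cnbhd sharp_E_def colour_class_def sharp_V_def)
  qed
  then have "card (cnbhd (sharp_V k n) (sharp_E k n) (Hub i) \<inter> colour_class k n i) \<le> 1"
    using card_mono[of "{Hub i}"] by fastforce
  ultimately show False by simp
qed

lemma double_coalition_colour_class_Leaf:
  assumes "i < k" "m < n" "2 \<le> k"
  shows "double_coalition (sharp_V k n) (sharp_E k n) (colour_class k n i) {Leaf i m}"
proof -
  have "Hub i \<in> sharp_V k n" using assms(1) by (simp add: sharp_V_def)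
  then have "\<not> double_dominating (sharp_V k n) (sharp_E k n) {Leaf i m}"
    by (rule not_double_dominating_singleton)
  then show ?thesis
    using not_double_dominating_colour_class[OF assms(1)] double_dominating_colour_class_Leaf[OF assms]
    unfolding double_coalition_def by (auto simp: colour_class_def)
qed

lemma sharp_partition_cases:
  assumes "A \<in> sharp_partition k n"
  obtains (colour_class) i where "i < k" "A = colour_class k n i"
    | (leaf) j m where "j < k" "m < n" "A = {Leaf j m}"
  using assms unfolding sharp_partition_def
proof (elim UnE imageE)
  fix p assume "p \<in> {..<k} \<times> {..<n}" "A = (\<lambda>(j, m). {Leaf j m}) p"
  then show thesis using leaf by (cases p) simp
qed (use colour_class in simp)

lemma sharp_partition_block:
  assumes "A \<in> sharp_partition k n" "x \<in> A"
  shows "A = (if \<exists>j m. x = Leaf j m then {x} else colour_class k n (colour x))"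
  using assms(1)
proof (cases rule: sharp_partition_cases)
  case (colour_class i)
  then have "\<not> (\<exists>j m. x = Leaf j m)" "colour x = i"
    using assms(2) unfolding colour_class_def by auto
  then show ?thesis using colour_class(2) by simp
qed (use assms(2) in simp)

lemma Union_sharp_partition: "\<Union>(sharp_partition k n) = sharp_V k n"
proof
  show "sharp_V k n \<subseteq> \<Union>(sharp_partition k n)"
  proof
    fix x assume x: "x \<in> sharp_V k n"
    show "x \<in> \<Union>(sharp_partition k n)"
    proof (cases "\<exists>j m. x = Leaf j m")
      case True
      then show ?thesis using x unfolding sharp_partition_def by (auto simp: sharp_V_def)
    next
      case False
      moreover have "colour x < k" using x by (cases x) (auto simp: sharp_V_def)
      ultimately show ?thesis
        using x unfolding sharp_partition_def colour_class_def by blast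
    qed
  qed
  show "\<Union>(sharp_partition k n) \<subseteq> sharp_V k n"
    unfolding sharp_partition_def colour_class_def by (auto simp: sharp_V_def)
qed

lemma dc_partition_sharp:
  assumes "2 \<le> k" "0 < n"
  shows "dc_partition (sharp_V k n) (sharp_E k n) (sharp_partition k n)"
  unfolding dc_partition_def
proof (intro conjI ballI impI)
  show "\<Union>(sharp_partition k n) = sharp_V k n" by (rule Union_sharp_partition)
  show "{} \<notin> sharp_partition k n"
  proof
    assume "{} \<in> sharp_partition k n"
    then show False
      by (cases rule: sharp_partition_cases) (use Hub_in_colour_class in blast)+
  qed
  fix A assume A: "A \<in> sharp_partition k n"
  show "A \<inter> B = {}" if B: "B \<in> sharp_partition k n" "A \<noteq> B" for B
  proof (rule ccontr)
    assume "A \<inter> B \<noteq> {}"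
    then obtain x where "x \<in> A" "x \<in> B" by blast
    have "A = B"
      using sharp_partition_block[OF A \<open>x \<in> A\<close>] sharp_partition_block[OF B(1) \<open>x \<in> B\<close>]
      by (rule trans[OF _ sym])
    with B(2) show False ..
  qed
  from A show "\<exists>B\<in>sharp_partition k n. B \<noteq> A \<and> double_coalition (sharp_V k n) (sharp_E k n) A B"
  proof (cases rule: sharp_partition_cases)
    case (colour_class i)
    have "{Leaf i 0} \<in> sharp_partition k n"
      unfolding sharp_partition_def using colour_class(1) assms(2) by (auto intro: rev_image_eqI)
    moreover have "{Leaf i 0} \<noteq> A" using colour_class Hub_in_colour_class by auto
    moreover have "double_coalition (sharp_V k n) (sharp_E k n) A {Leaf i 0}"
      unfolding colour_class(2) using colour_class(1) assms(2,1) by (rule double_coalition_colour_class_Leaf)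
    ultimately show ?thesis by blast
  next
    case (leaf j m)
    have "colour_class k n j \<in> sharp_partition k n"
      unfolding sharp_partition_def using leaf(1) by blast
    moreover have "colour_class k n j \<noteq> A" using leaf Hub_in_colour_class by auto
    moreover have "double_coalition (sharp_V k n) (sharp_E k n) A (colour_class k n j)"
      unfolding leaf(3) double_coalition_commute[of _ _ "{Leaf j m}"] using leaf(1,2) assms(1)
      by (rule double_coalition_colour_class_Leaf)
    ultimately show ?thesis by blast
  qed
qed

lemma card_sharp_partition: "card (sharp_partition k n) = k + k * n"
proof -
  have "inj_on (colour_class k n) {..<k}"
  proof (rule inj_onI)
    fix i i' assume "colour_class k n i = colour_class k n i'" "i \<in> {..<k}"
    then have "Hub i \<in> colour_class k n i'" using Hub_in_colour_class[of i k n] by simp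
    then show "i = i'" by (simp add: colour_class_def)
  qed
  moreover have "inj_on (\<lambda>(j, m). {Leaf j m}) ({..<k} \<times> {..<n})"
    by (auto simp: inj_on_def)
  moreover have "colour_class k n i \<noteq> {Leaf j m}" for i j m
  proof
    assume "colour_class k n i = {Leaf j m}"
    then have "Leaf j m \<in> colour_class k n i" by simp
    then show False by (simp add: colour_class_def)
  qed
  then have "colour_class k n ` {..<k} \<inter> (\<lambda>(j, m). {Leaf j m}) ` ({..<k} \<times> {..<n}) = {}"
    by auto
  ultimately show ?thesis
    unfolding sharp_partition_def
    by (simp add: card_Un_disjoint card_image card_cartesian_product)
qed

lemma sharp_graph_nat:
  assumes "2 \<le> k" "2 * k - 1 \<le> n"
  obtains V :: "nat set" and E where "graph V E" "min_deg V E = 2 * k - 1"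
    "max_deg V E = n + 2 * k - 2" "k + k * n \<le> DC V E"
proof -
  have "0 < k" "0 < n" using assms by auto
  obtain V :: "nat set" and E where "graph V E"
    "min_deg V E = min_deg (sharp_V k n) (sharp_E k n)"
    "max_deg V E = max_deg (sharp_V k n) (sharp_E k n)"
    "card (sharp_partition k n) \<le> DC V E"
    by (rule countable_graph_nat_copy[OF graph_sharp[OF \<open>0 < k\<close> \<open>0 < n\<close>]
          dc_partition_sharp[OF assms(1) \<open>0 < n\<close>]])
  then show thesis
    using min_deg_sharp[OF assms] max_deg_sharp[OF assms] card_sharp_partition[of k n]
    by (intro that[of V E]) simp_all
qed

lemma dc_bound_odd:
  assumes "1 \<le> k"
  shows "dc_bound (2 * k - 1) (n + 2 * k - 2) = k + k * n"
proof -
  have "(2 * k - 1 + 1) div 2 = k" "(2 * k - 1) div 2 = k - 1" "n + 2 * k - 2 + 2 - 2 * k = n"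
    using assms by presburger+
  then show ?thesis using assms unfolding dc_bound_def by (simp add: algebra_simps)
qed

theorem theorem4p1:
  shows "(\<forall>(V::'a set) E. graph V E \<and> min_deg V E \<ge> 1 \<and>
             max_deg V E + 3 \<ge> 4 * ((min_deg V E + 1) div 2) \<longrightarrow>
             DC V E \<le> dc_bound (min_deg V E) (max_deg V E)) \<and>
         (\<forall>d::nat. odd d \<and> d \<ge> 3 \<longrightarrow>
            (\<exists>(V::nat set) E. graph V E \<and> min_deg V E = d \<and>
               max_deg V E + 3 \<ge> 4 * ((d + 1) div 2) \<and>
               DC V E = dc_bound d (max_deg V E)))"
proof (intro conjI allI impI)
  fix V :: "'a set" and E
  assume "graph V E \<and> min_deg V E \<ge> 1 \<and> max_deg V E + 3 \<ge> 4 * ((min_deg V E + 1) div 2)"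
  then show "DC V E \<le> dc_bound (min_deg V E) (max_deg V E)" by (simp add: DC_le_dc_bound)
next
  fix d :: nat
  assume "odd d \<and> d \<ge> 3"
  define k where "k = (d + 1) div 2"
  have k: "d = 2 * k - 1" "2 \<le> k" "(d + 1) div 2 = k"
    using \<open>odd d \<and> d \<ge> 3\<close> unfolding k_def by (auto elim!: oddE)
  then obtain V :: "nat set" and E where G: "graph V E" "min_deg V E = d"
    "max_deg V E = d + 2 * k - 2" "k + k * d \<le> DC V E"
    using sharp_graph_nat[OF k(2), of d] by auto
  have "dc_bound d (max_deg V E) = k + k * d"
    using dc_bound_odd[of k d] G(3) k by simp
  moreover have "4 * ((d + 1) div 2) \<le> max_deg V E + 3"
    using G(3) k by linarith
  ultimately show "\<exists>(V::nat set) E. graph V E \<and> min_deg V E = d \<and>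
      max_deg V E + 3 \<ge> 4 * ((d + 1) div 2) \<and> DC V E = dc_bound d (max_deg V E)"
    using G DC_le_dc_bound[of V E] by (intro exI[of _ V] exI[of _ E]) auto
qed

end
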